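(* Let $F,G\colon P\to Q$ be two morphisms of $\omega$-polygraphs and $u$ a cell of $P^*$ such that $F^*(u)=G^*(u)$. Then $F(g)=G(g)$ for every generator $g\in\mathrm{supp}(u)$; that is, the restrictions $F/u,G/u\colon\mathrm{supp}(u)\to\mathrm{supp}(F^*(u))$ coincide.
   Context: An $\omega$-precategory is an $\omega$-globular set with identities $1_u$ and compositions $u\ast_iv$ satisfying the axioms of strict $\omega$-categories except the interchange law. An $\omega$-polygraph $P$ consists of sets $P_k$ of $k$-generators with globular sources and targets in the free precategory on lower generators; $P^*$ is the free $\omega$-precategory it generates, generators identified with cells; morphisms $F\colon P\to Q$ are generator-wise maps compatible with sources/targets, inducing $F^*$. The support $\mathrm{supp}(u)\subseteq\bigsqcup_kP_k$ of a cell is defined inductively: $\mathrm{supp}(g)=\{g\}$ for $g\in P_0$; $\mathrm{supp}(g)=\{g\}\cup\mathrm{supp}(s(g))\cup\mathrm{supp}(t(g))$ for a generator $g\in P_{k+1}$; $\mathrm{supp}(1_{u'})=\mathrm{supp}(u')$; $\mathrm{supp}(u_1\ast_iu_2)=\mathrm{supp}(u_1)\cup\mathrm{supp}(u_2)$. $F/u$ denotes the restriction of $F$ to $\mathrm{supp}(u)$, with values in $\mathrm{supp}(F^*(u))$. *)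

theory Defs
  imports Main
begin

text \<open>Cells of the free precategory are well-formed terms modulo the
  congruence generated by the precategory axioms (no interchange law).\<close>

datatype 'g tm = Gen 'g | Id "'g tm" | Comp nat "'g tm" "'g tm"

record 'g pol =
  gens :: "'g set"
  gdim :: "'g \<Rightarrow> nat"
  gsrc :: "'g \<Rightarrow> 'g tm"
  gtgt :: "'g \<Rightarrow> 'g tm"

fun tdim :: "'g pol \<Rightarrow> 'g tm \<Rightarrow> nat" where
  "tdim P (Gen g) = gdim P g"
| "tdim P (Id u) = Suc (tdim P u)"
| "tdim P (Comp i u v) = tdim P u"

fun tsrc :: "'g pol \<Rightarrow> 'g tm \<Rightarrow> 'g tm" where
  "tsrc P (Gen g) = gsrc P g"
| "tsrc P (Id u) = u"
| "tsrc P (Comp i u v) =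
     (if Suc i = tdim P u then tsrc P u else Comp i (tsrc P u) (tsrc P v))"

fun ttgt :: "'g pol \<Rightarrow> 'g tm \<Rightarrow> 'g tm" where
  "ttgt P (Gen g) = gtgt P g"
| "ttgt P (Id u) = u"
| "ttgt P (Comp i u v) =
     (if Suc i = tdim P u then ttgt P v else Comp i (ttgt P u) (ttgt P v))"

definition srci :: "'g pol \<Rightarrow> nat \<Rightarrow> 'g tm \<Rightarrow> 'g tm" where
  "srci P i u = (tsrc P ^^ (tdim P u - i)) u"

definition tgti :: "'g pol \<Rightarrow> nat \<Rightarrow> 'g tm \<Rightarrow> 'g tm" where
  "tgti P i u = (ttgt P ^^ (tdim P u - i)) u"

definition idn :: "nat \<Rightarrow> 'g tm \<Rightarrow> 'g tm" where
  "idn k u = (Id ^^ k) u"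

inductive cell :: "'g pol \<Rightarrow> 'g tm \<Rightarrow> bool" and eqv :: "'g pol \<Rightarrow> 'g tm \<Rightarrow> 'g tm \<Rightarrow> bool"
  for P :: "'g pol" where
  cell_gen: "g \<in> gens P \<Longrightarrow> cell P (Gen g)"
| cell_id: "cell P u \<Longrightarrow> cell P (Id u)"
| cell_comp: "\<lbrakk>cell P u; cell P v; tdim P u = tdim P v; i < tdim P u;
             eqv P (tgti P i u) (srci P i v)\<rbrakk> \<Longrightarrow> cell P (Comp i u v)"
| eqv_refl: "cell P u \<Longrightarrow> eqv P u u"
| eqv_sym: "eqv P u v \<Longrightarrow> eqv P v u"
| eqv_trans: "eqv P u v \<Longrightarrow> eqv P v w \<Longrightarrow> eqv P u w"
| eqv_id: "eqv P u u' \<Longrightarrow> eqv P (Id u) (Id u')"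
| eqv_comp: "\<lbrakk>eqv P u u'; eqv P v v'; cell P (Comp i u v); cell P (Comp i u' v')\<rbrakk>
             \<Longrightarrow> eqv P (Comp i u v) (Comp i u' v')"
| eqv_assoc: "\<lbrakk>cell P (Comp i (Comp i u v) w); cell P (Comp i u (Comp i v w))\<rbrakk>
             \<Longrightarrow> eqv P (Comp i (Comp i u v) w) (Comp i u (Comp i v w))"
| eqv_lunit: "\<lbrakk>cell P u; i < tdim P u;
               cell P (Comp i (idn (tdim P u - i) (srci P i u)) u)\<rbrakk>
             \<Longrightarrow> eqv P (Comp i (idn (tdim P u - i) (srci P i u)) u) u"
| eqv_runit: "\<lbrakk>cell P u; i < tdim P u;
               cell P (Comp i u (idn (tdim P u - i) (tgti P i u)))\<rbrakk>
             \<Longrightarrow> eqv P (Comp i u (idn (tdim P u - i) (tgti P i u))) u"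
| eqv_idcomp: "cell P (Comp i u v) \<Longrightarrow> eqv P (Id (Comp i u v)) (Comp i (Id u) (Id v))"

definition polygraph :: "'g pol \<Rightarrow> bool" where
  "polygraph P \<longleftrightarrow> (\<forall>g\<in>gens P. 0 < gdim P g \<longrightarrow>
      cell P (gsrc P g) \<and> cell P (gtgt P g) \<and>
      Suc (tdim P (gsrc P g)) = gdim P g \<and> Suc (tdim P (gtgt P g)) = gdim P g \<and>
      (1 < gdim P g \<longrightarrow>
         eqv P (tsrc P (gsrc P g)) (tsrc P (gtgt P g)) \<and>
         eqv P (ttgt P (gsrc P g)) (ttgt P (gtgt P g))))"

text \<open>A morphism of polygraphs: dimension-preserving generator-wise map compatible
  with sources and targets (in the free precategory Q^*). F^* is map_tm F.\<close>

definition pol_morphism :: "'g pol \<Rightarrow> 'h pol \<Rightarrow> ('g \<Rightarrow> 'h) \<Rightarrow> bool" where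
  "pol_morphism P Q F \<longleftrightarrow> (\<forall>g\<in>gens P. F g \<in> gens Q \<and> gdim Q (F g) = gdim P g \<and>
      (0 < gdim P g \<longrightarrow>
         eqv Q (gsrc Q (F g)) (map_tm F (gsrc P g)) \<and>
         eqv Q (gtgt Q (F g)) (map_tm F (gtgt P g))))"

inductive in_supp :: "'g pol \<Rightarrow> 'g \<Rightarrow> 'g tm \<Rightarrow> bool" for P :: "'g pol" where
  "in_supp P g (Gen g)"
| "\<lbrakk>0 < gdim P g; in_supp P x (gsrc P g)\<rbrakk> \<Longrightarrow> in_supp P x (Gen g)"
| "\<lbrakk>0 < gdim P g; in_supp P x (gtgt P g)\<rbrakk> \<Longrightarrow> in_supp P x (Gen g)"
| "in_supp P x u \<Longrightarrow> in_supp P x (Id u)"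
| "in_supp P x u \<Longrightarrow> in_supp P x (Comp i u v)"
| "in_supp P x v \<Longrightarrow> in_supp P x (Comp i u v)"

definition supp :: "'g pol \<Rightarrow> 'g tm \<Rightarrow> 'g set" where
  "supp P u = {x. in_supp P x u}"

end

(* The essential dimension edim of a term is its dimension once identities are discarded;
   egens lists, from left to right, the generators that stay visible when every composite
   along a dimension i in which one factor is degenerate (essential dimension at most i) is
   replaced by its other factor. Both are invariant under the precategory axioms; the missing
   interchange law matters here, as interchange would permute the list. Hence
   F^*(u) = G^*(u) forces F and G to agree on the essential generators of u. Every generator of
   supp(u) lies in the support of an essential generator z, and F z = G z makes the images of
   the source and target of z under F^* and G^* equal, so induction on dimension concludes. *)

theory Submission
  imports Defs
begin

lemma funpow_invariant:
  assumes step: "\<And>t. I t \<Longrightarrow> 0 < m t \<Longrightarrow> I (f t) \<and> m (f t) = m t - 1"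
  shows "I t \<Longrightarrow> k \<le> m t \<Longrightarrow> I ((f ^^ k) t) \<and> m ((f ^^ k) t) = m t - k"
proof (induction k arbitrary: t)
  case (Suc k)
  from step[OF Suc.prems(1)] Suc.prems(2) have "I (f t)" "m (f t) = m t - 1" by auto
  with Suc.IH[of "f t"] Suc.prems(2) show ?case by (simp only: funpow_Suc_right o_apply) simp
qed simp

lemma supp_Gen:
  "supp P (Gen g) =
     insert g (if 0 < gdim P g then supp P (gsrc P g) \<union> supp P (gtgt P g) else {})"
  by (auto simp: supp_def elim: in_supp.cases intro: in_supp.intros)

lemma supp_Id [simp]: "supp P (Id u) = supp P u"
  by (auto simp: supp_def elim: in_supp.cases intro: in_supp.intros)

lemma supp_Comp [simp]: "supp P (Comp i u v) = supp P u \<union> supp P v"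
  by (auto simp: supp_def elim: in_supp.cases intro: in_supp.intros)

lemma supp_Gen_subset:
  assumes "x \<in> supp P t"
  shows "supp P (Gen x) \<subseteq> supp P t"
proof -
  have "in_supp P x t \<Longrightarrow> in_supp P y (Gen x) \<Longrightarrow> in_supp P y t" for y
    by (induction rule: in_supp.induct) (auto intro: in_supp.intros)
  with assms show ?thesis
    by (auto simp: supp_def)
qed

inductive wf_tm :: "'g pol \<Rightarrow> 'g tm \<Rightarrow> bool" for P where
  "g \<in> gens P \<Longrightarrow> wf_tm P (Gen g)"
| "wf_tm P u \<Longrightarrow> wf_tm P (Id u)"
| "\<lbrakk>wf_tm P u; wf_tm P v; tdim P u = tdim P v; i < tdim P u\<rbrakk> \<Longrightarrow> wf_tm P (Comp i u v)"

lemma cell_imp_wf_tm: "cell P u \<Longrightarrow> wf_tm P u"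
  by (induction rule: cell_eqv.inducts(1)[where ?P2.0 = "\<lambda>u v. True"])
     (auto intro: wf_tm.intros)

lemma wf_tm_tsrc:
  assumes "polygraph P"
  shows "wf_tm P t \<Longrightarrow> 0 < tdim P t \<Longrightarrow>
     wf_tm P (tsrc P t) \<and> tdim P (tsrc P t) = tdim P t - 1"
  by (induction rule: wf_tm.induct)
     (use assms cell_imp_wf_tm in \<open>auto simp: polygraph_def intro: wf_tm.intros\<close>)

lemma wf_tm_ttgt:
  assumes "polygraph P"
  shows "wf_tm P t \<Longrightarrow> 0 < tdim P t \<Longrightarrow>
     wf_tm P (ttgt P t) \<and> tdim P (ttgt P t) = tdim P t - 1"
  by (induction rule: wf_tm.induct)
     (use assms cell_imp_wf_tm in \<open>auto simp: polygraph_def intro: wf_tm.intros\<close>)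

lemma supp_tsrc_subset:
  "wf_tm P t \<Longrightarrow> 0 < tdim P t \<Longrightarrow> supp P (tsrc P t) \<subseteq> supp P t"
  by (induction rule: wf_tm.induct) (auto simp: supp_Gen)

lemma supp_ttgt_subset:
  "wf_tm P t \<Longrightarrow> 0 < tdim P t \<Longrightarrow> supp P (ttgt P t) \<subseteq> supp P t"
  by (induction rule: wf_tm.induct) (auto simp: supp_Gen)

lemma wf_tm_srci:
  "polygraph P \<Longrightarrow> wf_tm P t \<Longrightarrow> i \<le> tdim P t \<Longrightarrow>
     wf_tm P (srci P i t) \<and> tdim P (srci P i t) = i"
  unfolding srci_def
  using funpow_invariant[of "wf_tm P" "tdim P" "tsrc P" t "tdim P t - i"] wf_tm_tsrc by auto

lemma wf_tm_tgti:
  "polygraph P \<Longrightarrow> wf_tm P t \<Longrightarrow> i \<le> tdim P t \<Longrightarrow>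
     wf_tm P (tgti P i t) \<and> tdim P (tgti P i t) = i"
  unfolding tgti_def
  using funpow_invariant[of "wf_tm P" "tdim P" "ttgt P" t "tdim P t - i"] wf_tm_ttgt by auto

lemma supp_srci_subset:
  "polygraph P \<Longrightarrow> wf_tm P t \<Longrightarrow> supp P (srci P i t) \<subseteq> supp P t"
  unfolding srci_def
  using funpow_invariant[of "\<lambda>s. wf_tm P s \<and> supp P s \<subseteq> supp P t" "tdim P" "tsrc P" t
      "tdim P t - i"] wf_tm_tsrc supp_tsrc_subset
  by fastforce

lemma supp_tgti_subset:
  "polygraph P \<Longrightarrow> wf_tm P t \<Longrightarrow> supp P (tgti P i t) \<subseteq> supp P t"
  unfolding tgti_def
  using funpow_invariant[of "\<lambda>s. wf_tm P s \<and> supp P s \<subseteq> supp P t" "tdim P" "ttgt P" t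
      "tdim P t - i"] wf_tm_ttgt supp_ttgt_subset
  by fastforce

fun edim :: "'g pol \<Rightarrow> 'g tm \<Rightarrow> nat" where
  "edim P (Gen g) = gdim P g"
| "edim P (Id u) = edim P u"
| "edim P (Comp i u v) =
     (if edim P u \<le> i \<and> edim P v \<le> i then edim P u else max (edim P u) (edim P v))"

fun egens :: "'g pol \<Rightarrow> 'g tm \<Rightarrow> 'g list" where
  "egens P (Gen g) = [g]"
| "egens P (Id u) = egens P u"
| "egens P (Comp i u v) =
     (if edim P u \<le> i then (if edim P v \<le> i then egens P u else egens P v)
      else (if edim P v \<le> i then egens P u else egens P u @ egens P v))"

lemma edim_le_tdim: "wf_tm P t \<Longrightarrow> edim P t \<le> tdim P t"
  by (induction rule: wf_tm.induct) auto

lemma gdim_le_edim: "z \<in> set (egens P t) \<Longrightarrow> gdim P z \<le> edim P t"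
  by (induction t) (auto split: if_splits)

lemma set_egens_subset_gens: "wf_tm P t \<Longrightarrow> set (egens P t) \<subseteq> gens P"
  by (induction rule: wf_tm.induct) auto

lemma set_egens_subset_supp: "set (egens P t) \<subseteq> supp P t"
  by (induction t) (auto simp: supp_Gen)

lemma egens_idn: "egens P (idn k s) = egens P s" and edim_idn: "edim P (idn k s) = edim P s"
  unfolding idn_def by (induction k) auto

lemma egens_map_tm:
  assumes "pol_morphism P Q F"
  shows "wf_tm P t \<Longrightarrow>
     egens Q (map_tm F t) = map F (egens P t) \<and> edim Q (map_tm F t) = edim P t"
  by (induction rule: wf_tm.induct) (use assms in \<open>auto simp: pol_morphism_def\<close>)

(* Records for degenerate composites what cell_comp derives from the boundary equivalence;
   unlike cell, this is preserved by faces by a plain structural induction. *)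
inductive egens_coherent :: "'g pol \<Rightarrow> 'g tm \<Rightarrow> bool" for P where
  "g \<in> gens P \<Longrightarrow> egens_coherent P (Gen g)"
| "egens_coherent P u \<Longrightarrow> egens_coherent P (Id u)"
| "\<lbrakk>egens_coherent P u; egens_coherent P v; tdim P u = tdim P v; i < tdim P u;
    edim P u \<le> i \<and> edim P v \<le> i \<longrightarrow> egens P u = egens P v \<and> edim P u = edim P v\<rbrakk>
   \<Longrightarrow> egens_coherent P (Comp i u v)"

lemma egens_coherent_imp_wf_tm: "egens_coherent P t \<Longrightarrow> wf_tm P t"
  by (induction rule: egens_coherent.induct) (auto intro: wf_tm.intros)

lemma egens_coherent_tsrc:
  assumes "polygraph P"
  shows "egens_coherent P t \<Longrightarrow> edim P t < tdim P t \<Longrightarrow>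
     egens_coherent P (tsrc P t) \<and> egens P (tsrc P t) = egens P t \<and> edim P (tsrc P t) = edim P t"
proof (induction rule: egens_coherent.induct)
  case (3 u v i)
  have "0 < tdim P u" "0 < tdim P v" "wf_tm P u" "wf_tm P v"
    using "3.hyps"(1-4) egens_coherent_imp_wf_tm by auto
  then have "tdim P (tsrc P u) = tdim P u - 1" "tdim P (tsrc P v) = tdim P v - 1"
    using wf_tm_tsrc[OF assms] by auto
  with 3 show ?case by (auto split: if_splits intro!: egens_coherent.intros)
qed auto

lemma egens_coherent_ttgt:
  assumes "polygraph P"
  shows "egens_coherent P t \<Longrightarrow> edim P t < tdim P t \<Longrightarrow>
     egens_coherent P (ttgt P t) \<and> egens P (ttgt P t) = egens P t \<and> edim P (ttgt P t) = edim P t"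
proof (induction rule: egens_coherent.induct)
  case (3 u v i)
  have "0 < tdim P u" "0 < tdim P v" "wf_tm P u" "wf_tm P v"
    using "3.hyps"(1-4) egens_coherent_imp_wf_tm by auto
  then have "tdim P (ttgt P u) = tdim P u - 1" "tdim P (ttgt P v) = tdim P v - 1"
    using wf_tm_ttgt[OF assms] by auto
  with 3 show ?case by (auto split: if_splits intro!: egens_coherent.intros)
qed auto

lemma egens_coherent_srci:
  assumes "polygraph P" "egens_coherent P t" "edim P t \<le> i" "i \<le> tdim P t"
  shows "egens P (srci P i t) = egens P t \<and> edim P (srci P i t) = edim P t"
proof -
  let ?I = "\<lambda>s. egens_coherent P s \<and> egens P s = egens P t \<and> edim P s = edim P t"
  have "?I s \<Longrightarrow> 0 < tdim P s - edim P s \<Longrightarrow>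
      ?I (tsrc P s) \<and> tdim P (tsrc P s) - edim P (tsrc P s) = tdim P s - edim P s - 1" for s
    using egens_coherent_tsrc[OF assms(1)] wf_tm_tsrc[OF assms(1)] egens_coherent_imp_wf_tm
    by fastforce
  from funpow_invariant[of ?I, OF this, of t "tdim P t - i"] show ?thesis
    using assms(2-4) by (simp add: srci_def)
qed

lemma egens_coherent_tgti:
  assumes "polygraph P" "egens_coherent P t" "edim P t \<le> i" "i \<le> tdim P t"
  shows "egens P (tgti P i t) = egens P t \<and> edim P (tgti P i t) = edim P t"
proof -
  let ?I = "\<lambda>s. egens_coherent P s \<and> egens P s = egens P t \<and> edim P s = edim P t"
  have "?I s \<Longrightarrow> 0 < tdim P s - edim P s \<Longrightarrow>
      ?I (ttgt P s) \<and> tdim P (ttgt P s) - edim P (ttgt P s) = tdim P s - edim P s - 1" for s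
    using egens_coherent_ttgt[OF assms(1)] wf_tm_ttgt[OF assms(1)] egens_coherent_imp_wf_tm
    by fastforce
  from funpow_invariant[of ?I, OF this, of t "tdim P t - i"] show ?thesis
    using assms(2-4) by (simp add: tgti_def)
qed

lemma egens_invariance:
  assumes pg: "polygraph P"
  shows cell_imp_egens_coherent: "cell P u \<Longrightarrow> egens_coherent P u"
    and eqv_imp_same_egens: "eqv P u v \<Longrightarrow> egens P u = egens P v \<and> edim P u = edim P v"
proof (induction rule: cell_eqv.inducts)
  case (cell_comp u v i)
  have "egens P u = egens P v \<and> edim P u = edim P v" if "edim P u \<le> i" "edim P v \<le> i"
    using egens_coherent_tgti[OF pg cell_comp(2)] egens_coherent_srci[OF pg cell_comp(4)]
      that cell_comp(5,6,8) by auto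
  with cell_comp show ?case by (auto intro: egens_coherent.intros)
next
  case (eqv_lunit u i)
  let ?s = "srci P i u"
  have "edim P ?s \<le> i"
    using wf_tm_srci[OF pg egens_coherent_imp_wf_tm[OF eqv_lunit(2)]] eqv_lunit(3)
      edim_le_tdim by (metis less_imp_le)
  moreover have "egens P ?s = egens P u \<and> edim P ?s = edim P u" if "edim P u \<le> i"
    using egens_coherent_srci[OF pg eqv_lunit(2) that] eqv_lunit(3) by simp
  ultimately show ?case by (auto simp: egens_idn edim_idn)
next
  case (eqv_runit u i)
  have "edim P (tgti P i u) \<le> i"
    using wf_tm_tgti[OF pg egens_coherent_imp_wf_tm[OF eqv_runit(2)]] eqv_runit(3)
      edim_le_tdim by (metis less_imp_le)
  then show ?case by (auto simp: egens_idn edim_idn)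
qed (auto simp: max_def intro: egens_coherent.intros)

lemma supp_subset_egens_supp:
  assumes pg: "polygraph P"
  shows "cell P u \<Longrightarrow> supp P u \<subseteq> (\<Union>z\<in>set (egens P u). supp P (Gen z))"
proof (induction rule: cell_eqv.inducts(1)[where ?P2.0 = "\<lambda>u v. True"])
  case (cell_comp u v i)
  have wf: "wf_tm P u" "wf_tm P v"
    using \<open>cell P u\<close> \<open>cell P v\<close> cell_imp_wf_tm by auto
  have boundary: "egens P (tgti P i u) = egens P (srci P i v)"
    using eqv_imp_same_egens[OF pg \<open>eqv P (tgti P i u) (srci P i v)\<close>] by simp
  define E where "E t = (\<Union>z\<in>set (egens P t). supp P (Gen z))" for t
  (* a degenerate factor has the essential generators of the common i-boundary *)
  have "E u \<subseteq> supp P v" if "edim P u \<le> i"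
  proof -
    have "egens P u = egens P (srci P i v)"
      using egens_coherent_tgti[OF pg cell_imp_egens_coherent[OF pg \<open>cell P u\<close>] that]
        \<open>tdim P u = tdim P v\<close> \<open>i < tdim P u\<close> boundary by simp
    then have "set (egens P u) \<subseteq> supp P v"
      using set_egens_subset_supp[of P "srci P i v"] supp_srci_subset[OF pg wf(2)] by auto
    then show ?thesis unfolding E_def using supp_Gen_subset by (meson UN_least subset_trans subsetD)
  qed
  moreover have "E v \<subseteq> supp P u" if "edim P v \<le> i"
  proof -
    have "egens P v = egens P (tgti P i u)"
      using egens_coherent_srci[OF pg cell_imp_egens_coherent[OF pg \<open>cell P v\<close>] that]
        \<open>tdim P u = tdim P v\<close> \<open>i < tdim P u\<close> boundary by simp
    then have "set (egens P v) \<subseteq> supp P u"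
      using set_egens_subset_supp[of P "tgti P i u"] supp_tgti_subset[OF pg wf(1)] by auto
    then show ?thesis unfolding E_def using supp_Gen_subset by (meson UN_least subset_trans subsetD)
  qed
  moreover have "supp P u \<subseteq> E u" "supp P v \<subseteq> E v"
    using cell_comp unfolding E_def by simp_all
  moreover have "E (Comp i u v) =
      (if edim P u \<le> i then (if edim P v \<le> i then E u else E v)
       else (if edim P v \<le> i then E u else E u \<union> E v))"
    unfolding E_def by simp
  ultimately have "supp P (Comp i u v) \<subseteq> E (Comp i u v)"
    by (simp only: supp_Comp split: if_split) blast
  then show ?case unfolding E_def .
qed simp_all

lemma egens_agree:
  assumes "polygraph Q" "pol_morphism P Q F" "pol_morphism P Q G" "cell P u"
    and "eqv Q (map_tm F u) (map_tm G u)" "z \<in> set (egens P u)"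
  shows "F z = G z"
proof -
  have "wf_tm P u" using assms(4) cell_imp_wf_tm by blast
  then have "map F (egens P u) = map G (egens P u)"
    using eqv_imp_same_egens[OF assms(1,5)] egens_map_tm[OF assms(2)] egens_map_tm[OF assms(3)]
    by simp
  with assms(6) show ?thesis by (simp add: map_eq_conv)
qed

lemma boundary_cell:
  assumes "polygraph P" "x \<in> gens P" "0 < gdim P x" "s \<in> {gsrc P x, gtgt P x}"
  shows "cell P s \<and> Suc (tdim P s) = gdim P x"
  using assms unfolding polygraph_def by blast

lemma eqv_boundary_images:
  assumes "pol_morphism P Q F" "pol_morphism P Q G" "x \<in> gens P" "0 < gdim P x"
    and "F x = G x" "s \<in> {gsrc P x, gtgt P x}"
  shows "eqv Q (map_tm F s) (map_tm G s)"
  using assms unfolding pol_morphism_def by (metis eqv_sym eqv_trans insertE singletonD)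

theorem lemma4p4:
  fixes P :: "'g pol" and Q :: "'h pol" and F G :: "'g \<Rightarrow> 'h" and u :: "'g tm"
  assumes "polygraph P" and "polygraph Q"
    and "pol_morphism P Q F" and "pol_morphism P Q G"
    and "cell P u"
    and "eqv Q (map_tm F u) (map_tm G u)"
  shows "\<forall>g\<in>supp P u. F g = G g"
proof -
  have "F y = G y" if "cell P u" "eqv Q (map_tm F u) (map_tm G u)" "y \<in> supp P u" for u y
    using that
  proof (induction "tdim P u" arbitrary: u y rule: less_induct)
    case less
    obtain z where z: "z \<in> set (egens P u)" "y \<in> supp P (Gen z)"
      using supp_subset_egens_supp[OF assms(1) less.prems(1)] less.prems(3) by blast
    have "F z = G z" "z \<in> gens P" "gdim P z \<le> tdim P u"
      using egens_agree[OF assms(2-4) less.prems(1,2) z(1)]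
        set_egens_subset_gens[OF cell_imp_wf_tm[OF less.prems(1)]] z(1)
        gdim_le_edim[OF z(1)] edim_le_tdim[OF cell_imp_wf_tm[OF less.prems(1)]] by auto
    consider "y = z" | s where "0 < gdim P z" "s \<in> {gsrc P z, gtgt P z}" "y \<in> supp P s"
      using z(2) unfolding supp_Gen by (auto split: if_splits)
    then show ?case
    proof cases
      case 1
      with \<open>F z = G z\<close> show ?thesis by simp
    next
      case 2
      have "cell P s" "tdim P s < tdim P u"
        using boundary_cell[OF assms(1) \<open>z \<in> gens P\<close> 2(1,2)] \<open>gdim P z \<le> tdim P u\<close>
        by auto
      moreover have "eqv Q (map_tm F s) (map_tm G s)"
        using eqv_boundary_images[OF assms(3,4) \<open>z \<in> gens P\<close> 2(1) \<open>F z = G z\<close> 2(2)] .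
      ultimately show ?thesis using less.hyps 2(3) by blast
    qed
  qed
  with assms(5,6) show ?thesis by blast
qed

end
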